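(* Define $U:[0,\infty)\to\mathbb{R}$ by $U(r)=\lim_{n\to\infty}u_n(r)$ where $u_0(r)=r$, $u_1(r)=\sqrt{1+r^2}$, $u_2(r)=\sqrt{1+\sqrt{1+r^4}}$, and in general $u_n(r)=\sqrt{1+\sqrt{1+\dots+\sqrt{1+r^{2^n}}}}$ ($n$ nested roots). For real numbers $s>r\ge1$, $U(s)>U(r)$.
   Context: The limit defining $U(r)$ exists for every $r\ge0$ (this is the transfinite radical $\kappa_i([i<\omega]+r[i=\omega])$). *)

theory Defs
  imports Complex_Main
begin

text \<open>Nested radicals: u 0 r = r, u (n+1) r = sqrt (1 + u n (r^2)),
  so u n r = sqrt(1 + sqrt(1 + ... + sqrt(1 + r^(2^n)))) with n roots.\<close>
fun u :: "nat \<Rightarrow> real \<Rightarrow> real" where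
  "u 0 r = r"
| "u (Suc n) r = sqrt (1 + u n (r ^ 2))"

definition U :: "real \<Rightarrow> real" where
  "U r = lim (\<lambda>n. u n r)"

end

theory Submission
  imports Defs
begin

text \<open>For r \<ge> 1 the sequence u n r increases in n and is bounded by r + 1, so
  r \<le> U r \<le> r + 1 and U r = sqrt (1 + U (r ^ 2)). Iterating this equation N times
  compares U s with U r through U (s ^ 2 ^ N) and U (r ^ 2 ^ N), and the bounds separate these
  as soon as s ^ 2 ^ N > r ^ 2 ^ N + 1, which holds for large N since s ^ n - r ^ n \<ge> n (s - r).\<close>

lemma u_le_Suc: "u n x \<le> u (Suc n) x"
proof (induction n arbitrary: x)
  case 0
  have "x \<le> sqrt (x\<^sup>2)" by simp
  also have "\<dots> \<le> sqrt (1 + x\<^sup>2)" by (rule real_sqrt_le_mono) simp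
  finally show ?case by simp
next
  case (Suc n)
  have "u n (x\<^sup>2) \<le> u (Suc n) (x\<^sup>2)"
    by (rule Suc.IH)
  then show ?case
    by (simp only: u.simps(2) real_sqrt_le_iff add_le_cancel_left)
qed

lemma incseq_u: "incseq (\<lambda>n. u n x)"
  by (intro incseq_SucI u_le_Suc)

lemma u_le_add_one: "1 \<le> x \<Longrightarrow> u n x \<le> x + 1"
proof (induction n arbitrary: x)
  case 0
  then show ?case by simp
next
  case (Suc n)
  have "u n (x\<^sup>2) \<le> x\<^sup>2 + 1"
    using Suc by (simp add: one_le_power)
  then have "sqrt (1 + u n (x\<^sup>2)) \<le> sqrt ((x + 1)\<^sup>2)"
    using Suc.prems by (intro real_sqrt_le_mono) (simp add: power2_eq_square algebra_simps)
  then show ?case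
    using Suc.prems by simp
qed

lemma u_tendsto_U:
  assumes "1 \<le> r"
  shows "(\<lambda>n. u n r) \<longlonglongrightarrow> U r"
proof -
  obtain L where "(\<lambda>n. u n r) \<longlonglongrightarrow> L"
    using incseq_convergent[OF incseq_u, of r "r + 1"] u_le_add_one[OF assms] by blast
  then show ?thesis
    unfolding U_def by (simp add: limI)
qed

lemma le_U: "1 \<le> r \<Longrightarrow> r \<le> U r"
  using incseq_le[OF incseq_u u_tendsto_U, of r 0] by simp

lemma U_le_add_one: "1 \<le> r \<Longrightarrow> U r \<le> r + 1"
  using LIMSEQ_le_const2[OF u_tendsto_U] u_le_add_one by blast

lemma U_eq_sqrt_U_square:
  assumes "1 \<le> r"
  shows "U r = sqrt (1 + U (r\<^sup>2))"
proof (rule LIMSEQ_unique)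
  show "(\<lambda>n. u (Suc n) r) \<longlonglongrightarrow> U r"
    using u_tendsto_U[OF assms] by (rule LIMSEQ_Suc)
  have "1 \<le> r\<^sup>2"
    using assms by (simp add: one_le_power)
  then show "(\<lambda>n. u (Suc n) r) \<longlonglongrightarrow> sqrt (1 + U (r\<^sup>2))"
    by (simp add: u_tendsto_U tendsto_real_sqrt tendsto_add)
qed

lemma U_less_if_power_gap:
  "1 \<le> r \<Longrightarrow> r \<le> s \<Longrightarrow> r ^ 2 ^ N + 1 < s ^ 2 ^ N \<Longrightarrow> U r < U s"
proof (induction N arbitrary: r s)
  case 0
  then show ?case
    using U_le_add_one[of r] le_U[of s] by simp
next
  case (Suc N)
  have "U (r\<^sup>2) < U (s\<^sup>2)"
  proof (rule Suc.IH)
    show "1 \<le> r\<^sup>2" "r\<^sup>2 \<le> s\<^sup>2"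
      using Suc.prems by (simp_all add: one_le_power power_mono)
    show "(r\<^sup>2) ^ 2 ^ N + 1 < (s\<^sup>2) ^ 2 ^ N"
      using Suc.prems(3) by (simp add: power_mult[symmetric] mult.commute)
  qed
  moreover have "U r = sqrt (1 + U (r\<^sup>2))"
    using Suc.prems(1) by (rule U_eq_sqrt_U_square)
  moreover have "U s = sqrt (1 + U (s\<^sup>2))"
    using Suc.prems by (intro U_eq_sqrt_U_square) simp
  ultimately show ?case
    by simp
qed

lemma power_diff_ge_mult_diff:
  fixes r s :: real
  assumes "1 \<le> r" "r \<le> s"
  shows "n * (s - r) \<le> s ^ n - r ^ n"
proof (induction n)
  case 0
  then show ?case by simp
next
  case (Suc n)
  have "s ^ Suc n - r ^ Suc n = s * (s ^ n - r ^ n) + r ^ n * (s - r)"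
    by (simp add: algebra_simps)
  moreover have "1 * (s ^ n - r ^ n) \<le> s * (s ^ n - r ^ n)"
    using assms by (intro mult_right_mono) (simp_all add: power_mono)
  moreover have "1 * (s - r) \<le> r ^ n * (s - r)"
    using assms by (intro mult_right_mono) (simp_all add: one_le_power)
  ultimately show ?case
    using Suc.IH by (simp add: algebra_simps)
qed

theorem lemma9:
  fixes r s :: real
  assumes "1 \<le> r" and "r < s"
  shows "U s > U r"
proof -
  obtain N :: nat where "1 / (s - r) < 2 ^ N"
    using real_arch_pow[of 2 "1 / (s - r)"] by auto
  then have "1 < 2 ^ N * (s - r)"
    using assms by (simp add: field_simps)
  also have "\<dots> \<le> s ^ 2 ^ N - r ^ 2 ^ N"
    using power_diff_ge_mult_diff[of r s "2 ^ N"] assms by simp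
  finally have "r ^ 2 ^ N + 1 < s ^ 2 ^ N"
    by simp
  then show ?thesis
    using assms by (intro U_less_if_power_gap) simp_all
qed

end
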